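(* Consider the ODE system \[ \dot S = -\kappa\rho S(\pi_1 W_1+\pi_2 W_2),\quad \dot I = \kappa\rho S(\pi_1 W_1+\pi_2 W_2)-\gamma I,\quad \dot R = \gamma I, \] \[ \dot W_1 = \alpha\eta I+\delta_2 W_2-(\xi_1+\delta_1)W_1,\quad \dot W_2 = \alpha(1-\eta) I+\delta_1 W_1-(\xi_2+\delta_2)W_2, \] with parameters $\kappa,\rho,\pi_1,\pi_2,\gamma,\alpha,\xi_1,\xi_2>0$, $\delta_1,\delta_2\ge 0$, $0\le\eta\le 1$, and total population $N$, with disease-free equilibrium $(S,I,R,W_1,W_2)=(N,0,0,0,0)$. Let $\tau_i=1/(\xi_i+\delta_i)$ and $\phi_i=\delta_i/(\xi_i+\delta_i)$ for $i=1,2$. Then the basic reproduction number of this system, computed by the next generation method, is \[ \mathcal{R}_0=\frac{\alpha\kappa\rho N}{\gamma}\left(\pi_1\tau_1\,\frac{\eta+(1-\eta)\phi_2}{1-\phi_1\phi_2}+\pi_2\tau_2\,\frac{(1-\eta)+\eta\phi_1}{1-\phi_1\phi_2}\right). \]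
   Context: The next generation method: with infected compartments ordered $(I,W_1,W_2)$, let $F$ be the Jacobian at the disease-free equilibrium of the new-infection terms, namely the term $\kappa\rho S(\pi_1W_1+\pi_2W_2)$ in the $I$ equation (all other entries zero), and let $V$ be the Jacobian at the disease-free equilibrium of the remaining transition terms (so the infected subsystem linearization is $F-V$, with shedding $\alpha\eta I,\alpha(1-\eta)I$, conversions $\delta_i W_i$, removals and recovery all placed in $V$). Then $\mathcal{R}_0$ is the spectral radius of $FV^{-1}$. Here $S,I,R$ are numbers of susceptible, infectious, recovered people and $W_1,W_2$ are environmental concentrations of labile and persistent pathogens. *)

theory Defs
  imports "Jordan_Normal_Form.Spectral_Radius" "Jordan_Normal_Form.Gauss_Jordan_Elimination" "HOL-Analysis.Derivative"
begin

text \<open>Infected compartments are ordered (I, W1, W2), indexed 0, 1, 2.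
  Each vector field below is a function of the index i and of the state (S, I, W1, W2)
  (R does not enter the infected subsystem).\<close>

definition newinf :: "real \<Rightarrow> real \<Rightarrow> real \<Rightarrow> real \<Rightarrow> nat \<Rightarrow> real \<Rightarrow> real \<Rightarrow> real \<Rightarrow> real \<Rightarrow> real" where
  "newinf \<kappa> \<rho> \<pi>1 \<pi>2 i S I W1 W2 =
     (if i = 0 then \<kappa> * \<rho> * S * (\<pi>1 * W1 + \<pi>2 * W2) else 0)"

text \<open>Remaining transition terms, with the sign convention that the infected
  subsystem is  d/dt x = newinf - trans.\<close>
definition trans_terms :: "real \<Rightarrow> real \<Rightarrow> real \<Rightarrow> real \<Rightarrow> real \<Rightarrow> real \<Rightarrow> real \<Rightarrow>
    nat \<Rightarrow> real \<Rightarrow> real \<Rightarrow> real \<Rightarrow> real \<Rightarrow> real" where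
  "trans_terms \<gamma> \<alpha> \<eta> \<delta>1 \<delta>2 \<xi>1 \<xi>2 i S I W1 W2 =
     (if i = 0 then \<gamma> * I
      else if i = 1 then - (\<alpha> * \<eta> * I + \<delta>2 * W2 - (\<xi>1 + \<delta>1) * W1)
      else - (\<alpha> * (1 - \<eta>) * I + \<delta>1 * W1 - (\<xi>2 + \<delta>2) * W2))"

definition jac_dfe :: "(nat \<Rightarrow> real \<Rightarrow> real \<Rightarrow> real \<Rightarrow> real \<Rightarrow> real) \<Rightarrow> real \<Rightarrow> real mat" where
  "jac_dfe f N = Matrix.mat 3 3 (\<lambda>(i, j). deriv (\<lambda>t. f i N (if j = 0 then t else 0)
        (if j = 1 then t else 0) (if j = 2 then t else 0)) 0)"

definition next_gen_R0 :: "real mat \<Rightarrow> real mat \<Rightarrow> real" where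
  "next_gen_R0 F V = spectral_radius (Matrix.map_mat complex_of_real (F * the (mat_inverse V)))"

end

(* New infections only enter I, so F has a single nonzero row, and hence so does F V^-1: it is
   upper triangular with diagonal (r, 0, 0) and its spectral radius is |r|. Since I leaves only by
   recovery, V is block lower triangular and V^-1 is explicit; r is then a rational expression in
   the rates, and dividing through by (xi1 + delta1) (xi2 + delta2) turns it into the form with
   residence times tau_i and transfer probabilities phi_i. *)

theory Submission
  imports Defs
begin

lemma spectrum_upper_triangular:
  fixes A :: "'a :: field mat"
  assumes "A \<in> carrier_mat n n" "upper_triangular A"
  shows "spectrum A = set (diag_mat A)"
  unfolding spectrum_root_char_poly[OF assms(1)] char_poly_upper_triangular[OF assms]
  by (auto simp: poly_prod_list prod_list_zero_iff)

lemma spectral_radius_row_0_only: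
  fixes A :: "complex mat"
  assumes A: "A \<in> carrier_mat n n" and "0 < n"
    and rows: "\<And>i j. 0 < i \<Longrightarrow> i < n \<Longrightarrow> j < n \<Longrightarrow> A $$ (i, j) = 0"
  shows "spectral_radius A = cmod (A $$ (0, 0))"
proof -
  have "upper_triangular A"
    using A by (intro upper_triangularI) (simp add: rows)
  then have spec: "spectrum A = set (diag_mat A)"
    using spectrum_upper_triangular[OF A] by blast
  have "set (diag_mat A) \<subseteq> {A $$ (0, 0), 0}"
  proof
    fix x assume "x \<in> set (diag_mat A)"
    then obtain i where "i < n" "x = A $$ (i, i)"
      using A by (auto simp: diag_mat_def)
    then show "x \<in> {A $$ (0, 0), 0}"
      using rows by (cases "i = 0") auto
  qed
  moreover have "A $$ (0, 0) \<in> set (diag_mat A)"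
    using A \<open>0 < n\<close> by (auto simp: diag_mat_def)
  ultimately show ?thesis
    unfolding spectral_radius_def spec by (intro Max_eqI) auto
qed

lemma mat_inverse_eq_Some:
  fixes A B :: "'a :: field mat"
  assumes A: "A \<in> carrier_mat n n" and B: "B \<in> carrier_mat n n"
    and AB: "A * B = 1\<^sub>m n" and BA: "B * A = 1\<^sub>m n"
  shows "mat_inverse A = Some B"
proof -
  have "A \<in> Units (ring_mat TYPE('a) n ())"
    using A B AB BA unfolding Units_def ring_mat_simps by auto
  then obtain B' where B': "mat_inverse A = Some B'"
    using mat_inverse(1)[OF A] by fastforce
  then have B'A: "B' * A = 1\<^sub>m n" and B'_carrier: "B' \<in> carrier_mat n n"
    using mat_inverse(2)[OF A] by auto
  have "B' = B' * (A * B)"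
    using B'_carrier AB by simp
  also have "\<dots> = (B' * A) * B"
    using A B B'_carrier by (simp add: assoc_mult_mat)
  also have "\<dots> = B"
    using B B'A by simp
  finally show ?thesis
    using B' by simp
qed

definition transmission_mat :: "'a :: zero \<Rightarrow> 'a \<Rightarrow> 'a mat" where
  "transmission_mat b1 b2 = mat_of_rows_list 3 [[0, b1, b2], [0, 0, 0], [0, 0, 0]]"

definition transition_mat :: "'a :: ring \<Rightarrow> 'a \<Rightarrow> 'a \<Rightarrow> 'a \<Rightarrow> 'a \<Rightarrow> 'a \<Rightarrow> 'a \<Rightarrow> 'a mat" where
  "transition_mat g a1 a2 c1 c2 d1 d2 =
     mat_of_rows_list 3 [[g, 0, 0], [- a1, c1, - d2], [- a2, - d1, c2]]"

(* Block inverse of [[g, 0], [-a, M]] with M = [[c1, -d2], [-d1, c2]]: the lower left block is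
   M^-1 a / g. *)
definition transition_mat_inv :: "'a :: field \<Rightarrow> 'a \<Rightarrow> 'a \<Rightarrow> 'a \<Rightarrow> 'a \<Rightarrow> 'a \<Rightarrow> 'a \<Rightarrow> 'a mat" where
  "transition_mat_inv g a1 a2 c1 c2 d1 d2 =
     (let D = c1 * c2 - d1 * d2
      in mat_of_rows_list 3
          [[1 / g, 0, 0],
           [(c2 * a1 + d2 * a2) / (g * D), c2 / D, d2 / D],
           [(d1 * a1 + c1 * a2) / (g * D), d1 / D, c1 / D]])"

lemma transition_mat_inverse:
  fixes g a1 a2 c1 c2 d1 d2 :: "'a :: field"
  assumes "g \<noteq> 0" "c1 * c2 \<noteq> d1 * d2"
  shows "mat_inverse (transition_mat g a1 a2 c1 c2 d1 d2) = Some (transition_mat_inv g a1 a2 c1 c2 d1 d2)"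
    and "invertible_mat (transition_mat g a1 a2 c1 c2 d1 d2)"
proof -
  let ?V = "transition_mat g a1 a2 c1 c2 d1 d2" and ?W = "transition_mat_inv g a1 a2 c1 c2 d1 d2"
  have carrier: "?V \<in> carrier_mat 3 3" "?W \<in> carrier_mat 3 3"
    by (simp_all add: transition_mat_def transition_mat_inv_def Let_def mat_of_rows_list_def numeral_3_eq_3)
  have "?V * ?W = 1\<^sub>m 3" "?W * ?V = 1\<^sub>m 3"
    by (rule eq_matI;
        simp add: transition_mat_def transition_mat_inv_def Let_def mat_of_rows_list_def;
        auto simp: less_Suc_eq numeral_3_eq_3 scalar_prod_def divide_simps assms;
        simp add: algebra_simps)+
  with carrier show "mat_inverse ?V = Some ?W" "invertible_mat ?V"
    using mat_inverse_eq_Some[of ?V 3 ?W] unfolding invertible_mat_def inverts_mat_def by auto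
qed

lemma deriv_eq_if_linear:
  fixes f :: "'a :: real_normed_field \<Rightarrow> 'a"
  assumes "\<And>t. f t = c * t"
  shows "deriv f x = c"
proof -
  have "f = (\<lambda>t. c * t)"
    using assms by blast
  then show ?thesis
    by simp
qed

lemma jac_dfe_newinf:
  "jac_dfe (newinf \<kappa> \<rho> \<pi>1 \<pi>2) N = transmission_mat (\<kappa> * \<rho> * N * \<pi>1) (\<kappa> * \<rho> * N * \<pi>2)"
  by (rule eq_matI)
    (auto simp: jac_dfe_def transmission_mat_def mat_of_rows_list_def newinf_def less_Suc_eq numeral_3_eq_3
      intro!: deriv_eq_if_linear)

lemma jac_dfe_trans_terms:
  "jac_dfe (trans_terms \<gamma> \<alpha> \<eta> \<delta>1 \<delta>2 \<xi>1 \<xi>2) N =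
     transition_mat \<gamma> (\<alpha> * \<eta>) (\<alpha> * (1 - \<eta>)) (\<xi>1 + \<delta>1) (\<xi>2 + \<delta>2) \<delta>1 \<delta>2"
  by (rule eq_matI)
    (auto simp: jac_dfe_def transition_mat_def mat_of_rows_list_def trans_terms_def less_Suc_eq numeral_3_eq_3
      algebra_simps intro!: deriv_eq_if_linear)

lemma next_gen_R0_transmission_transition:
  fixes g a1 a2 c1 c2 d1 d2 b1 b2 :: real
  assumes "g \<noteq> 0" "c1 * c2 \<noteq> d1 * d2"
  shows "next_gen_R0 (transmission_mat b1 b2) (transition_mat g a1 a2 c1 c2 d1 d2) =
    \<bar>(b1 * (c2 * a1 + d2 * a2) + b2 * (d1 * a1 + c1 * a2)) / (g * (c1 * c2 - d1 * d2))\<bar>"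
proof -
  let ?K = "transmission_mat b1 b2 * transition_mat_inv g a1 a2 c1 c2 d1 d2"
  have carrier: "?K \<in> carrier_mat 3 3"
    by (rule mult_carrier_mat[of _ 3 3])
      (simp_all add: transmission_mat_def transition_mat_inv_def Let_def mat_of_rows_list_def numeral_3_eq_3)
  have rows: "?K $$ (i, j) = 0" if "0 < i" "i < 3" "j < 3" for i j
  proof -
    have "Matrix.row (transmission_mat b1 b2) i = 0\<^sub>v 3"
      using that by (auto simp: transmission_mat_def mat_of_rows_list_def Matrix.vec_eq_iff less_Suc_eq numeral_3_eq_3)
    then show ?thesis
      using that carrier_matD[OF carrier]
      by (simp add: index_mult_mat transition_mat_inv_def Let_def mat_of_rows_list_def)
  qed
  have corner: "?K $$ (0, 0) = (b1 * (c2 * a1 + d2 * a2) + b2 * (d1 * a1 + c1 * a2)) / (g * (c1 * c2 - d1 * d2))"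
    using carrier_matD[OF carrier]
    by (simp add: index_mult_mat transmission_mat_def transition_mat_inv_def Let_def mat_of_rows_list_def
        scalar_prod_def numeral_3_eq_3 add_divide_distrib ring_distribs)
  have "spectral_radius (map_mat complex_of_real ?K) = cmod (map_mat complex_of_real ?K $$ (0, 0))"
    using carrier carrier_matD[OF carrier] rows by (intro spectral_radius_row_0_only[where n = 3]) auto
  also have "\<dots> = \<bar>?K $$ (0, 0)\<bar>"
    using carrier_matD[OF carrier] by (subst index_map_mat(1)) auto
  finally show ?thesis
    unfolding next_gen_R0_def transition_mat_inverse(1)[OF assms] option.sel corner .
qed

lemma R0_entry_residence_form:
  fixes \<kappa> \<rho> \<pi>1 \<pi>2 \<gamma> \<alpha> \<eta> c1 c2 \<delta>1 \<delta>2 N :: real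
  assumes "\<kappa> > 0" "\<rho> > 0" "\<pi>1 > 0" "\<pi>2 > 0" "\<gamma> > 0" "\<alpha> > 0" "N > 0"
    and "c1 > 0" "c2 > 0" "\<delta>1 \<ge> 0" "\<delta>2 \<ge> 0" "\<delta>1 * \<delta>2 < c1 * c2" "0 \<le> \<eta>" "\<eta> \<le> 1"
  shows "\<bar>(\<kappa> * \<rho> * N * \<pi>1 * (c2 * (\<alpha> * \<eta>) + \<delta>2 * (\<alpha> * (1 - \<eta>)))
            + \<kappa> * \<rho> * N * \<pi>2 * (\<delta>1 * (\<alpha> * \<eta>) + c1 * (\<alpha> * (1 - \<eta>))))
          / (\<gamma> * (c1 * c2 - \<delta>1 * \<delta>2))\<bar> =
    \<alpha> * \<kappa> * \<rho> * N / \<gamma> *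
      (\<pi>1 * (1 / c1) * ((\<eta> + (1 - \<eta>) * (\<delta>2 / c2)) / (1 - \<delta>1 / c1 * (\<delta>2 / c2)))
     + \<pi>2 * (1 / c2) * (((1 - \<eta>) + \<eta> * (\<delta>1 / c1)) / (1 - \<delta>1 / c1 * (\<delta>2 / c2))))"
proof -
  \<comment> \<open>An opaque name for the determinant keeps \<open>field_simps\<close> from expanding it.\<close>
  obtain D where D: "c1 * c2 - \<delta>1 * \<delta>2 = D" and D_pos: "D > 0"
    using assms by simp
  have denominator: "1 - \<delta>1 / c1 * (\<delta>2 / c2) = D / (c1 * c2)"
    unfolding D[symmetric] using assms by (simp add: diff_divide_distrib)
  have nonneg: "0 \<le> (\<kappa> * \<rho> * N * \<pi>1 * (c2 * (\<alpha> * \<eta>) + \<delta>2 * (\<alpha> * (1 - \<eta>)))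
            + \<kappa> * \<rho> * N * \<pi>2 * (\<delta>1 * (\<alpha> * \<eta>) + c1 * (\<alpha> * (1 - \<eta>)))) / (\<gamma> * D)"
    using assms D_pos by (simp add: mult_nonneg_nonneg add_nonneg_nonneg)
  show ?thesis
    unfolding D denominator abs_of_nonneg[OF nonneg] using assms D_pos by (simp add: field_simps)
qed

theorem proposition1:
  fixes \<kappa> \<rho> \<pi>1 \<pi>2 \<gamma> \<alpha> \<eta> \<delta>1 \<delta>2 \<xi>1 \<xi>2 N :: real
  assumes "\<kappa> > 0" "\<rho> > 0" "\<pi>1 > 0" "\<pi>2 > 0" "\<gamma> > 0" "\<alpha> > 0" "\<xi>1 > 0" "\<xi>2 > 0"
    and "\<delta>1 \<ge> 0" "\<delta>2 \<ge> 0" "0 \<le> \<eta>" "\<eta> \<le> 1" "N > 0"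
  shows "let F = jac_dfe (newinf \<kappa> \<rho> \<pi>1 \<pi>2) N;
             V = jac_dfe (trans_terms \<gamma> \<alpha> \<eta> \<delta>1 \<delta>2 \<xi>1 \<xi>2) N;
             \<tau>1 = 1 / (\<xi>1 + \<delta>1); \<tau>2 = 1 / (\<xi>2 + \<delta>2);
             \<phi>1 = \<delta>1 / (\<xi>1 + \<delta>1); \<phi>2 = \<delta>2 / (\<xi>2 + \<delta>2)
         in invertible_mat V \<and>
            next_gen_R0 F V =
              \<alpha> * \<kappa> * \<rho> * N / \<gamma> *
                (\<pi>1 * \<tau>1 * ((\<eta> + (1 - \<eta>) * \<phi>2) / (1 - \<phi>1 * \<phi>2))
               + \<pi>2 * \<tau>2 * (((1 - \<eta>) + \<eta> * \<phi>1) / (1 - \<phi>1 * \<phi>2)))"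
proof -
  have c_pos: "\<xi>1 + \<delta>1 > 0" "\<xi>2 + \<delta>2 > 0"
    using assms by auto
  have det: "\<delta>1 * \<delta>2 < (\<xi>1 + \<delta>1) * (\<xi>2 + \<delta>2)"
  proof -
    have "0 \<le> \<delta>1 * \<xi>2" "0 \<le> \<delta>2 * \<xi>1" "0 < \<xi>1 * \<xi>2"
      using assms by auto
    then show ?thesis
      by (simp add: algebra_simps)
  qed
  have V_conds: "\<gamma> \<noteq> 0" "(\<xi>1 + \<delta>1) * (\<xi>2 + \<delta>2) \<noteq> \<delta>1 * \<delta>2"
    using assms det by auto
  show ?thesis
    unfolding Let_def jac_dfe_newinf jac_dfe_trans_terms next_gen_R0_transmission_transition[OF V_conds]
      R0_entry_residence_form[OF assms(1-6,13) c_pos assms(9,10) det assms(11,12)]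
    using transition_mat_inverse(2)[OF V_conds] by simp
qed

end
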